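(* Let $d, N, s \ge 1$ and let $\mathbf{x}[1],\ldots,\mathbf{x}[N] \in \mathbb{R}^{d}$ be jointly Gaussian, zero-mean random vectors with $\mathrm{E}\{\mathbf{x}[n]\mathbf{x}^{T}[n']\} = \delta_{n,n'}\mathbf{C}[n]$, where the covariance matrices satisfy $0<\alpha[n] \le \lambda_{\min}(\mathbf{C}[n]) \le \lambda_{\max}(\mathbf{C}[n]) \le \beta[n]$ for given constants $\beta[n]\ge\alpha[n]>0$. Let $\mathbf{K}[n] := (\mathbf{C}[n])^{-1}$. Define the conditional independence graph $\mathcal{G}=(\mathcal{V},\mathcal{E})$ with $\mathcal{V}=\{1,\ldots,d\}$ by: for $a\neq b$, $(a,b)\notin\mathcal{E}$ iff $(\mathbf{K}[n])_{a,b}=0$ for all $n\in\{1,\ldots,N\}$. Let $\mathcal{N}(r)=\{t\in\mathcal{V}:(r,t)\in\mathcal{E}\}$ and assume $|\mathcal{N}(r)|\le s$ for all $r$. Define for $a\ne b$ the partial correlation $$\rho_{a,b} := \frac{1}{N}\sum_{n=1}^{N} \alpha[n]\Big[ (\mathbf{K}[n])_{a,b} / (\mathbf{K}[n])_{a,a}\Big]^2,$$ and assume there is $\rho_{\min}>0$ with $\rho_{a,b}\ge\rho_{\min}$ whenever $(a,b)\in\mathcal{E}$. For $i\in\mathcal{V}$ let $\mathbf{x}_i[\cdot]=(x_i[1],\ldots,x_i[N])^T$, and for $r\in\mathcal{V}$ and $\mathcal{T}\subseteq\mathcal{V}\setminus\{r\}$ let $$\mathrm{CV}(r,\mathcal{T})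 := \frac{1}{N}\,\mathrm{Tr}\Big\{ \mathrm{cov}\big\{ \mathbf{x}_r[\cdot] \,\big|\, \{\mathbf{x}_t[\cdot]\}_{t\in\mathcal{T}} \big\} \Big\}.$$ Let $\widetilde{\mathbf{K}}[r,r]$ denote the $N\times N$ diagonal matrix $\mathrm{diag}\big((\mathbf{K}[1])_{r,r},\ldots,(\mathbf{K}[N])_{r,r}\big)$ (equivalently, the $(r,r)$-th $N\times N$ block of the inverse covariance matrix of the component-wise stacked vector $(\mathbf{x}_1[\cdot]^T,\ldots,\mathbf{x}_d[\cdot]^T)^T$). Then for every $r\in\mathcal{V}$ and every $\mathcal{T}\subseteq\mathcal{V}\setminus\{r\}$ with $|\mathcal{T}|\le s$: (i) if $\mathcal{N}(r)\setminus\mathcal{T}\neq\emptyset$, then $\mathrm{CV}(r,\mathcal{T}) \ge \rho_{\min} + \frac{1}{N}\mathrm{Tr}\{\widetilde{\mathbf{K}}[r,r]^{-1}\}$; (ii) if $\mathcal{N}(r)\subseteq\mathcal{T}$, then $\mathrm{CV}(r,\mathcal{T}) = \frac{1}{N}\mathrm{Tr}\{\widetilde{\mathbf{K}}[r,r]^{-1}\}$.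
   Context: $\delta_{n,n'}$ is the Kronecker delta; $\lambda_{\min},\lambda_{\max}$ denote the smallest and largest eigenvalues. $\mathrm{cov}\{\mathbf{y}\mid\mathbf{z}\}$ denotes the conditional covariance matrix of $\mathbf{y}$ given $\mathbf{z}$ (deterministic for jointly Gaussian vectors). The graph $\mathcal{G}$ is an undirected simple graph; $(a,b)\in\mathcal{E}$ and $(b,a)\in\mathcal{E}$ mean the same edge. *)

theory Defs
  imports "Jordan_Normal_Form.Char_Poly" "Jordan_Normal_Form.Gauss_Jordan_Elimination"
          "Jordan_Normal_Form.DL_Submatrix"
begin

(* Conventions: vertices V = {0..<d}, time indices {0..<N} (0-based versions of
   {1..d}, {1..N}). Matrices are JNF matrices. *)

definition mtrace :: "real mat \<Rightarrow> real" where
  "mtrace A = (\<Sum>i<dim_row A. A $$ (i, i))"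

definition minv :: "real mat \<Rightarrow> real mat" where
  "minv A = the (mat_inverse A)"

(* covariance matrix of the stacked vector (x_0[.]^T,...,x_{d-1}[.]^T)^T,
   entry index k corresponds to component k div N at time k mod N;
   E{x[n] x[n']^T} = delta_{n,n'} C[n] *)
definition stacked_cov :: "nat \<Rightarrow> nat \<Rightarrow> (nat \<Rightarrow> real mat) \<Rightarrow> real mat" where
  "stacked_cov d N C = mat (d * N) (d * N)
     (\<lambda>(k, l). if k mod N = l mod N then C (k mod N) $$ (k div N, l div N) else 0)"

definition comp_idx :: "nat \<Rightarrow> nat \<Rightarrow> nat set \<Rightarrow> nat set" where
  "comp_idx d N S = {k. k < d * N \<and> k div N \<in> S}"

(* conditional covariance cov{y | z} of jointly Gaussian zero-mean vectors
   y = (entries Y), z = (entries Z) of a vector with covariance S: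
   S_YY - S_YZ S_ZZ^{-1} S_ZY *)
definition cond_cov :: "real mat \<Rightarrow> nat set \<Rightarrow> nat set \<Rightarrow> real mat" where
  "cond_cov S Y Z =
     submatrix S Y Y - submatrix S Y Z * minv (submatrix S Z Z) * submatrix S Z Y"

definition CV :: "nat \<Rightarrow> nat \<Rightarrow> (nat \<Rightarrow> real mat) \<Rightarrow> nat \<Rightarrow> nat set \<Rightarrow> real" where
  "CV d N C r T = mtrace (cond_cov (stacked_cov d N C) (comp_idx d N {r}) (comp_idx d N T)) / real N"

definition Kmat :: "(nat \<Rightarrow> real mat) \<Rightarrow> nat \<Rightarrow> real mat" where
  "Kmat C n = minv (C n)"

definition cig_edge :: "nat \<Rightarrow> nat \<Rightarrow> (nat \<Rightarrow> real mat) \<Rightarrow> nat \<Rightarrow> nat \<Rightarrow> bool" where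
  "cig_edge d N C a b = (a < d \<and> b < d \<and> a \<noteq> b \<and> (\<exists>n<N. Kmat C n $$ (a, b) \<noteq> 0))"

definition nbhd :: "nat \<Rightarrow> nat \<Rightarrow> (nat \<Rightarrow> real mat) \<Rightarrow> nat \<Rightarrow> nat set" where
  "nbhd d N C r = {t. t < d \<and> cig_edge d N C r t}"

definition part_corr :: "nat \<Rightarrow> (nat \<Rightarrow> real mat) \<Rightarrow> (nat \<Rightarrow> real) \<Rightarrow> nat \<Rightarrow> nat \<Rightarrow> real" where
  "part_corr N C \<alpha> a b =
     (\<Sum>n<N. \<alpha> n * (Kmat C n $$ (a, b) / Kmat C n $$ (a, a))\<^sup>2) / real N"

definition Ktilde :: "nat \<Rightarrow> (nat \<Rightarrow> real mat) \<Rightarrow> nat \<Rightarrow> real mat" where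
  "Ktilde N C r = mat N N (\<lambda>(i, j). if i = j then Kmat C i $$ (r, r) else 0)"

end

theory Submission
  imports Defs "HOL-Analysis.Analysis"
begin

(* The stacked covariance is block diagonal across time, so for each time n the conditional
   variance of x_r[n] given the x_T[.] is a Schur complement of C[n]: by the variational
   formula c^T M^-1 c = max_w (2 c.w - w^T M w) it equals the minimum of u^T C[n] u over
   vectors u with u_r = 1 that vanish outside T and r.  Writing u = g + h with
   g = K[n] e_r / K[n]_rr, the vector h has h_r = 0 and is C[n]-orthogonal to g, so
   u^T C[n] u = 1 / K[n]_rr + h^T C[n] h >= 1 / K[n]_rr + alpha[n] |u - g|^2.
   For a neighbour b outside T the b-th entry of u - g is -K[n]_rb / K[n]_rr, which
   after averaging over n gives (i); if every neighbour lies in T then g itself is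
   admissible and the minimum is 1 / K[n]_rr, which gives (ii). *)

section \<open>Quadratic forms\<close>

definition qform :: "nat \<Rightarrow> real mat \<Rightarrow> (nat \<Rightarrow> real) \<Rightarrow> (nat \<Rightarrow> real) \<Rightarrow> real" where
  "qform n A x y = (\<Sum>i<n. \<Sum>j<n. x i * A $$ (i, j) * y j)"

definition sqnorm :: "nat \<Rightarrow> (nat \<Rightarrow> real) \<Rightarrow> real" where
  "sqnorm n x = (\<Sum>i<n. (x i)\<^sup>2)"

lemma sqnorm_nonneg: "0 \<le> sqnorm n x"
  unfolding sqnorm_def by (intro sum_nonneg) auto

lemma sqnorm_eq_0_imp: "sqnorm n x = 0 \<Longrightarrow> i < n \<Longrightarrow> x i = 0"
  unfolding sqnorm_def by (subst (asm) sum_nonneg_eq_0_iff) auto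

lemma sq_le_sqnorm: "i < n \<Longrightarrow> (x i)\<^sup>2 \<le> sqnorm n x"
  unfolding sqnorm_def by (rule member_le_sum) auto

lemma sqnorm_cong: "(\<And>i. i < n \<Longrightarrow> x i = x' i) \<Longrightarrow> sqnorm n x = sqnorm n x'"
  unfolding sqnorm_def by simp

lemma qform_cong:
  "(\<And>i. i < n \<Longrightarrow> x i = x' i) \<Longrightarrow> (\<And>i. i < n \<Longrightarrow> y i = y' i) \<Longrightarrow> qform n A x y = qform n A x' y'"
  unfolding qform_def by simp

lemma sqnorm_scale: "sqnorm n (\<lambda>i. c * x i) = c\<^sup>2 * sqnorm n x"
  unfolding sqnorm_def by (simp add: sum_distrib_left power_mult_distrib)

lemma qform_scale: "qform n A (\<lambda>i. c * x i) (\<lambda>i. c * x i) = c\<^sup>2 * qform n A x x"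
  unfolding qform_def by (simp add: sum_distrib_left algebra_simps power2_eq_square)

lemma qform_add_scaled:
  "qform n A (\<lambda>i. x i + t * y i) (\<lambda>i. x i + t * y i) =
     qform n A x x + t * qform n A x y + t * qform n A y x + t\<^sup>2 * qform n A y y"
  unfolding qform_def by (simp add: algebra_simps sum.distrib sum_distrib_left power2_eq_square)

lemma qform_commute:
  assumes "\<And>i j. i < n \<Longrightarrow> j < n \<Longrightarrow> A $$ (i, j) = A $$ (j, i)"
  shows "qform n A x y = qform n A y x"
  unfolding qform_def using assms by (subst sum.swap) (auto intro!: sum.cong simp: mult_ac)

lemma sum_lessThan_restrict:
  fixes n :: nat
  assumes "T \<subseteq> {..<n}"
  shows "(\<Sum>t<n. if t \<in> T then f t else 0) = sum f T"
  using sum.inter_restrict[of "{..<n}" f T] assms by (simp add: Int_absorb1)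

lemma qform_restrict:
  assumes "T \<subseteq> {..<n}"
  shows "qform n A (\<lambda>t. if t \<in> T then x t else 0) (\<lambda>t. if t \<in> T then x t else 0)
       = (\<Sum>t\<in>T. \<Sum>t'\<in>T. x t * A $$ (t, t') * x t')"
proof -
  have "qform n A (\<lambda>t. if t \<in> T then x t else 0) (\<lambda>t. if t \<in> T then x t else 0)
      = (\<Sum>t<n. if t \<in> T then (\<Sum>t'<n. if t' \<in> T then x t * A $$ (t, t') * x t' else 0) else 0)"
    unfolding qform_def by (auto intro!: sum.cong)
  then show ?thesis unfolding sum_lessThan_restrict[OF assms] .
qed

lemma qform_unit_left:
  assumes "r < n"
  shows "qform n A (\<lambda>t. if t = r then 1 else 0) y = (\<Sum>j<n. A $$ (r, j) * y j)"
proof -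
  have "qform n A (\<lambda>t. if t = r then 1 else 0) y
      = (\<Sum>i<n. if i = r then (\<Sum>j<n. A $$ (r, j) * y j) else 0)"
    unfolding qform_def by (intro sum.cong refl) auto
  then show ?thesis using assms by simp
qed

lemma qform_zero_imp_mult_zero:
  assumes sym: "\<And>i j. i < n \<Longrightarrow> j < n \<Longrightarrow> A $$ (i, j) = A $$ (j, i)"
    and psd: "\<And>y. 0 \<le> qform n A y y" and zero: "qform n A x x = 0" and i: "i < n"
  shows "(\<Sum>j<n. A $$ (i, j) * x j) = 0"
proof -
  define y where "y i = (\<Sum>j<n. A $$ (i, j) * x j)" for i
  define p where "p = sqnorm n y"
  define q where "q = qform n A y y"
  have yx: "qform n A y x = p"
    unfolding qform_def p_def sqnorm_def power2_eq_square
    by (simp add: y_def sum_distrib_left mult.assoc)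
  have xy: "qform n A x y = p" using yx qform_commute[OF sym, where x=x and y=y] by simp
  have q_nonneg: "0 \<le> q" using psd q_def by simp
  define t where "t = - p / (q + 1)"
  \<comment> \<open>x is a minimiser, so the form stays nonnegative along x + t A x; this t forces A x = 0\<close>
  have "0 \<le> qform n A (\<lambda>i. x i + t * y i) (\<lambda>i. x i + t * y i)" using psd by simp
  also have "\<dots> = 2 * t * p + t\<^sup>2 * q"
    unfolding qform_add_scaled zero xy yx q_def by simp
  also have "\<dots> = - p\<^sup>2 * (q + 2) / (q + 1)\<^sup>2"
  proof -
    have "q + 1 \<noteq> 0" using q_nonneg by linarith
    then show ?thesis unfolding t_def
      by (simp add: divide_simps power2_eq_square) (simp add: algebra_simps)
  qed
  finally have "p\<^sup>2 * (q + 2) / (q + 1)\<^sup>2 \<le> 0" by simp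
  moreover have "0 < (q + 1)\<^sup>2" using q_nonneg by simp
  ultimately have "p\<^sup>2 * (q + 2) \<le> 0" by (simp add: divide_le_0_iff)
  with q_nonneg have "p = 0" by (simp add: mult_le_0_iff)
  then show ?thesis using sqnorm_eq_0_imp i unfolding p_def y_def by blast
qed

section \<open>Eigenvalue bounds for symmetric matrices\<close>

lemma qform_attains_min_on_unit_sphere:
  assumes "0 < n"
  obtains x0 where "sqnorm n x0 = 1" and "\<And>y. qform n A x0 x0 * sqnorm n y \<le> qform n A y y"
proof -
  define B where "B = PiE UNIV (\<lambda>i::nat. if i < n then {-1..1::real} else {0})"
  define Sph where "Sph = B \<inter> {x. sqnorm n x = 1}"
  have coord: "continuous_on UNIV (\<lambda>x::nat \<Rightarrow> real. x i)" for i
    by simp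
  have "compactin (product_topology (\<lambda>i. euclidean) UNIV) B"
    unfolding B_def by (subst compactin_PiE) auto
  then have "compact B" by (simp add: euclidean_product_topology)
  moreover have "closed {x. sqnorm n x = 1}"
    unfolding sqnorm_def by (intro closed_Collect_eq continuous_intros coord)
  ultimately have "compact Sph" unfolding Sph_def by (rule compact_Int_closed)
  define e0 where "e0 i = (if i = 0 then 1 else 0 :: real)" for i :: nat
  have "sqnorm n e0 = (\<Sum>i<n. if i = 0 then 1 else 0)"
    unfolding sqnorm_def e0_def by (intro sum.cong) auto
  with assms have "sqnorm n e0 = 1" by simp
  then have "e0 \<in> Sph" using assms unfolding Sph_def B_def by (auto simp: e0_def)
  moreover have "continuous_on Sph (\<lambda>x. qform n A x x)"
    unfolding qform_def by (intro continuous_intros continuous_on_subset[OF coord]) auto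
  ultimately obtain x0 where x0: "x0 \<in> Sph" and min: "\<And>y. y \<in> Sph \<Longrightarrow> qform n A x0 x0 \<le> qform n A y y"
    using continuous_attains_inf[OF \<open>compact Sph\<close>] by blast
  have "qform n A x0 x0 * sqnorm n y \<le> qform n A y y" for y
  proof (cases "sqnorm n y = 0")
    case True
    then have "qform n A y y = 0" unfolding qform_def by (simp add: sqnorm_eq_0_imp)
    with True show ?thesis by simp
  next
    case False
    then have pos: "0 < sqnorm n y" using sqnorm_nonneg[of n y] by linarith
    \<comment> \<open>rescale y onto the unit sphere, zeroing the irrelevant coordinates to land in B\<close>
    define c where "c = 1 / sqrt (sqnorm n y)"
    define z where "z i = c * (if i < n then y i else 0)" for i
    have c2: "c\<^sup>2 = 1 / sqnorm n y" unfolding c_def using pos by (simp add: power_divide)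
    have z_sq: "sqnorm n z = 1"
      using sqnorm_cong[of n z "\<lambda>i. c * y i"] pos by (simp add: z_def sqnorm_scale c2)
    have "\<bar>z i\<bar> \<le> 1" if "i < n" for i
      using sq_le_sqnorm[OF that, of z] z_sq by (simp add: abs_square_le_1)
    then have "z \<in> Sph" using z_sq unfolding Sph_def B_def by (auto simp: z_def abs_le_iff)
    then have "qform n A x0 x0 \<le> qform n A z z" by (rule min)
    also have "qform n A z z = qform n A y y / sqnorm n y"
      using qform_cong[of n z "\<lambda>i. c * y i" z "\<lambda>i. c * y i" A] by (simp add: z_def qform_scale c2)
    finally show ?thesis using pos by (simp add: pos_le_divide_eq)
  qed
  moreover have "sqnorm n x0 = 1" using x0 unfolding Sph_def by simp
  ultimately show ?thesis using that by blast
qed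

lemma qform_ge_eigenvalue_bound:
  fixes A :: "real mat"
  assumes A: "A \<in> carrier_mat n n"
    and sym: "\<And>i j. i < n \<Longrightarrow> j < n \<Longrightarrow> A $$ (i, j) = A $$ (j, i)"
    and eig: "\<And>lam. eigenvalue A lam \<Longrightarrow> a \<le> lam"
  shows "a * sqnorm n x \<le> qform n A x x"
proof (cases "n = 0")
  case True
  then show ?thesis unfolding qform_def sqnorm_def by simp
next
  case False
  then obtain x0 where unit: "sqnorm n x0 = 1"
    and min: "\<And>y. qform n A x0 x0 * sqnorm n y \<le> qform n A y y"
    using qform_attains_min_on_unit_sphere by blast
  define m where "m = qform n A x0 x0"
  \<comment> \<open>A - m I is positive semidefinite and vanishes on x0, hence x0 is an eigenvector for m\<close>
  define B where "B = A - m \<cdot>\<^sub>m 1\<^sub>m n"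
  have B_index: "B $$ (i, j) = A $$ (i, j) - (if i = j then m else 0)" if "i < n" "j < n" for i j
    using A that by (simp add: B_def)
  have qform_B: "qform n B y y = qform n A y y - m * sqnorm n y" for y
  proof -
    have "qform n B y y = (\<Sum>i<n. \<Sum>j<n. y i * A $$ (i, j) * y j - (if i = j then m * y i * y j else 0))"
      unfolding qform_def by (intro sum.cong refl) (auto simp: B_index algebra_simps)
    also have "\<dots> = qform n A y y - m * sqnorm n y"
      unfolding qform_def sqnorm_def sum_subtractf sum_distrib_left
      by (simp add: power2_eq_square mult.assoc)
    finally show ?thesis .
  qed
  have ker: "(\<Sum>j<n. A $$ (i, j) * x0 j) = m * x0 i" if i: "i < n" for i
  proof -
    have "0 = (\<Sum>j<n. B $$ (i, j) * x0 j)"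
      by (rule qform_zero_imp_mult_zero[OF _ _ _ i, symmetric])
        (use sym min in \<open>auto simp: B_index qform_B unit m_def mult.commute\<close>)
    also have "\<dots> = (\<Sum>j<n. A $$ (i, j) * x0 j - (if i = j then m * x0 j else 0))"
      by (intro sum.cong refl) (auto simp: B_index i algebra_simps)
    also have "\<dots> = (\<Sum>j<n. A $$ (i, j) * x0 j) - m * x0 i"
      unfolding sum_subtractf using i by simp
    finally show ?thesis by simp
  qed
  define v where "v = Matrix.vec n x0"
  have "A *\<^sub>v v = m \<cdot>\<^sub>v v"
    using A ker by (intro eq_vecI) (auto simp: v_def scalar_prod_def lessThan_atLeast0)
  moreover have "v \<noteq> 0\<^sub>v n"
  proof
    assume "v = 0\<^sub>v n"
    then have "x0 i = 0" if "i < n" for i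
      using that by (metis v_def index_vec index_zero_vec(1))
    then have "sqnorm n x0 = 0" by (simp add: sqnorm_def)
    with unit show False by simp
  qed
  ultimately have "eigenvalue A m"
    using A unfolding eigenvalue_def eigenvector_def v_def by (blast intro: vec_carrier)
  then have "a * sqnorm n x \<le> m * sqnorm n x" using eig sqnorm_nonneg by (simp add: mult_right_mono)
  also have "\<dots> \<le> qform n A x x" using min m_def by (simp add: mult.commute)
  finally show ?thesis .
qed

section \<open>Inverse matrices\<close>

lemma index_mult_mat_sum:
  assumes "A \<in> carrier_mat n m" "B \<in> carrier_mat m p" "i < n" "j < p"
  shows "(A * B) $$ (i, j) = (\<Sum>l<m. A $$ (i, l) * B $$ (l, j))"
  using assms by (simp add: scalar_prod_def atLeast0LessThan)

lemma minv_if_det_nonzero: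
  assumes A: "A \<in> carrier_mat n n" and det: "Determinant.det A \<noteq> 0"
  shows "A * minv A = 1\<^sub>m n" and "minv A * A = 1\<^sub>m n" and "minv A \<in> carrier_mat n n"
proof -
  have unit: "A \<in> Units (ring_mat TYPE(real) n ())" by (rule det_non_zero_imp_unit[OF A det])
  obtain B where B: "mat_inverse A = Some B"
    using mat_inverse(1)[OF A, where b="()"] unit by (cases "mat_inverse A") auto
  from mat_inverse(2)[OF A B]
  show "A * minv A = 1\<^sub>m n" and "minv A * A = 1\<^sub>m n" and "minv A \<in> carrier_mat n n"
    unfolding minv_def B by auto
qed

lemma minv_if_qform_definite:
  assumes A: "A \<in> carrier_mat n n"
    and definite: "\<And>x. qform n A x x = 0 \<Longrightarrow> \<forall>i<n. x i = 0"
  shows "A * minv A = 1\<^sub>m n" and "minv A * A = 1\<^sub>m n" and "minv A \<in> carrier_mat n n"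
proof -
  have "v = 0\<^sub>v n" if v: "v \<in> carrier_vec n" and Av: "A *\<^sub>v v = 0\<^sub>v n" for v
  proof -
    have "qform n A (($) v) (($) v) = (\<Sum>i<n. v $ i * (A *\<^sub>v v) $ i)"
      unfolding qform_def using A v
      by (simp add: scalar_prod_def sum_distrib_left lessThan_atLeast0 mult.assoc)
    also have "\<dots> = 0" using Av by simp
    finally show ?thesis using v definite by (intro eq_vecI) auto
  qed
  then have "Determinant.det A \<noteq> 0" using det_0_iff_vec_prod_zero_field[OF A] by blast
  then show "A * minv A = 1\<^sub>m n" and "minv A * A = 1\<^sub>m n" and "minv A \<in> carrier_mat n n"
    using minv_if_det_nonzero[OF A] by auto
qed

lemma minv_eq_if_right_inverse:
  assumes A: "A \<in> carrier_mat n n" and B: "B \<in> carrier_mat n n" and AB: "A * B = 1\<^sub>m n"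
  shows "minv A = B"
proof -
  have "Determinant.det A * Determinant.det B = 1"
    using det_mult[OF A B] AB by simp
  then have "Determinant.det A \<noteq> 0" by auto
  note inv = minv_if_det_nonzero[OF A this]
  have "minv A = minv A * (A * B)" using AB inv(3) by simp
  also have "\<dots> = (minv A * A) * B" using inv(3) A B by simp
  also have "\<dots> = B" using inv(2) B by simp
  finally show ?thesis .
qed

lemma minv_mat_diag:
  assumes "\<And>i. i < n \<Longrightarrow> f i \<noteq> 0"
  shows "minv (mat_diag n f) = mat_diag n (\<lambda>i. 1 / f i)"
proof (rule minv_eq_if_right_inverse)
  show "mat_diag n f * mat_diag n (\<lambda>i. 1 / f i) = 1\<^sub>m n"
    unfolding mat_diag_diag using assms by (intro eq_matI) (auto simp: mat_diag_def)
qed simp_all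

lemma qform_inverse_variational:
  fixes M P :: "real mat"
  assumes M: "M \<in> carrier_mat m m" and P: "P \<in> carrier_mat m m" and MP: "M * P = 1\<^sub>m m"
    and sym: "\<And>a b. a < m \<Longrightarrow> b < m \<Longrightarrow> M $$ (a, b) = M $$ (b, a)"
    and psd: "\<And>w. 0 \<le> qform m M w w"
  shows "2 * (\<Sum>a<m. c a * w a) - qform m M w w \<le> qform m P c c"
    and "\<exists>w. 2 * (\<Sum>a<m. c a * w a) - qform m M w w = qform m P c c"
proof -
  define w0 where "w0 a = (\<Sum>b<m. P $$ (a, b) * c b)" for a
  have M_w0: "(\<Sum>b<m. M $$ (a, b) * w0 b) = c a" if a: "a < m" for a
  proof -
    have "(\<Sum>b<m. M $$ (a, b) * w0 b) = (\<Sum>e<m. (\<Sum>b<m. M $$ (a, b) * P $$ (b, e)) * c e)"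
      unfolding w0_def sum_distrib_left sum_distrib_right
      by (subst sum.swap) (simp add: mult.assoc)
    also have "\<dots> = (\<Sum>e<m. (if a = e then c e else 0))"
      using index_mult_mat_sum[OF M P a, symmetric] MP a by (intro sum.cong) auto
    also have "\<dots> = c a" using a by simp
    finally show ?thesis .
  qed
  have cross: "qform m M y w0 = (\<Sum>a<m. c a * y a)" for y
  proof -
    have "qform m M y w0 = (\<Sum>a<m. y a * (\<Sum>b<m. M $$ (a, b) * w0 b))"
      unfolding qform_def by (simp add: sum_distrib_left mult.assoc)
    also have "\<dots> = (\<Sum>a<m. c a * y a)" by (intro sum.cong refl) (simp add: M_w0)
    finally show ?thesis .
  qed
  have cross': "qform m M w0 y = (\<Sum>a<m. c a * y a)" for y
    using cross qform_commute[OF sym] by metis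
  have c_w0: "(\<Sum>a<m. c a * w0 a) = qform m P c c"
    by (simp add: qform_def w0_def sum_distrib_left mult_ac)
  have "0 \<le> qform m M (\<lambda>a. w a + (-1) * w0 a) (\<lambda>a. w a + (-1) * w0 a)" by (rule psd)
  then show "2 * (\<Sum>a<m. c a * w a) - qform m M w w \<le> qform m P c c"
    unfolding qform_add_scaled cross cross' c_w0 by simp
  have "2 * (\<Sum>a<m. c a * w0 a) - qform m M w0 w0 = qform m P c c"
    unfolding cross c_w0 by simp
  then show "\<exists>w. 2 * (\<Sum>a<m. c a * w a) - qform m M w w = qform m P c c" by blast
qed

definition scaled_row :: "real mat \<Rightarrow> nat \<Rightarrow> nat \<Rightarrow> real" where
  "scaled_row K r t = K $$ (r, t) / K $$ (r, r)"

locale spd_inverse =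
  fixes A K :: "real mat" and n :: nat and a :: real
  assumes A: "A \<in> carrier_mat n n" and K: "K \<in> carrier_mat n n" and KA: "K * A = 1\<^sub>m n"
    and sym: "\<And>i j. i < n \<Longrightarrow> j < n \<Longrightarrow> A $$ (i, j) = A $$ (j, i)"
    and pd: "\<And>x. a * sqnorm n x \<le> qform n A x x" and a_pos: "0 < a"
begin

lemma qform_inverse_row_left:
  assumes r: "r < n"
  shows "qform n A (\<lambda>t. K $$ (r, t)) y = y r"
proof -
  have "qform n A (\<lambda>t. K $$ (r, t)) y = (\<Sum>j<n. (\<Sum>i<n. K $$ (r, i) * A $$ (i, j)) * y j)"
    unfolding qform_def sum_distrib_right by (subst sum.swap) simp
  also have "\<dots> = (\<Sum>j<n. if r = j then y j else 0)"
    using index_mult_mat_sum[OF K A r, symmetric] KA r by (intro sum.cong) auto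
  also have "\<dots> = y r" using r by simp
  finally show ?thesis .
qed

lemma inverse_diag_pos:
  assumes r: "r < n"
  shows "0 < K $$ (r, r)"
proof -
  define k where "k = (\<lambda>t. K $$ (r, t))"
  have "sqnorm n k \<noteq> 0"
  proof
    assume "sqnorm n k = 0"
    then have "qform n A k (\<lambda>_. 1) = 0"
      unfolding qform_def by (simp add: sqnorm_eq_0_imp)
    with qform_inverse_row_left[OF r, of "\<lambda>_. 1"] show False by (simp add: k_def)
  qed
  then have "0 < a * sqnorm n k" using a_pos sqnorm_nonneg[of n k] by simp
  also have "\<dots> \<le> qform n A k k" by (rule pd)
  also have "\<dots> = K $$ (r, r)" using qform_inverse_row_left[OF r] by (simp add: k_def)
  finally show ?thesis .
qed

lemma qform_scaled_row_left:
  assumes r: "r < n"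
  shows "qform n A (scaled_row K r) y = y r / K $$ (r, r)"
proof -
  have "qform n A (scaled_row K r) y = qform n A (\<lambda>t. K $$ (r, t)) y / K $$ (r, r)"
    unfolding qform_def scaled_row_def by (simp add: sum_divide_distrib)
  then show ?thesis using qform_inverse_row_left[OF r] by simp
qed

lemma scaled_row_self:
  assumes "r < n"
  shows "scaled_row K r r = 1"
  using inverse_diag_pos[OF assms] by (simp add: scaled_row_def)

lemma qform_scaled_row:
  "r < n \<Longrightarrow> qform n A (scaled_row K r) (scaled_row K r) = 1 / K $$ (r, r)"
  by (simp add: qform_scaled_row_left scaled_row_self)

lemma qform_ge_scaled_row:
  assumes r: "r < n" and u: "u r = 1"
  shows "1 / K $$ (r, r) + a * sqnorm n (\<lambda>t. u t - scaled_row K r t) \<le> qform n A u u"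
proof -
  define g where "g = scaled_row K r"
  define h where "h = (\<lambda>t. u t - g t)"
  \<comment> \<open>h r = 0 makes h A-orthogonal to g\<close>
  have g_h: "qform n A g h = 0"
    using qform_scaled_row_left[OF r] u scaled_row_self[OF r] by (simp add: g_def h_def)
  have h_g: "qform n A h g = 0"
    using g_h qform_commute[OF sym, where x=h and y=g] by simp
  have "qform n A u u = qform n A (\<lambda>t. g t + 1 * h t) (\<lambda>t. g t + 1 * h t)"
    by (simp add: h_def)
  also have "\<dots> = 1 / K $$ (r, r) + qform n A h h"
    unfolding qform_add_scaled g_h h_g by (simp add: g_def qform_scaled_row[OF r])
  finally show ?thesis using pd[of h] by (simp add: h_def g_def)
qed

end

lemma bij_betw_pick:
  assumes "finite Z"
  shows "bij_betw (pick Z) {..<card Z} Z"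
proof (rule bij_betw_byWitness[where f' = "\<lambda>k. card {z \<in> Z. z < k}"])
  have "card {z \<in> Z. z < k} < card Z" if "k \<in> Z" for k
    using that assms by (intro psubset_card_mono) auto
  then show "(\<lambda>k. card {z \<in> Z. z < k}) ` Z \<subseteq> {..<card Z}" by auto
qed (auto simp: card_pick pick_card_in_set pick_in_set)

lemma sum_pick: "finite Z \<Longrightarrow> (\<Sum>a<card Z. f (pick Z a)) = (\<Sum>k\<in>Z. f k)"
  by (rule sum.reindex_bij_betw[OF bij_betw_pick])

definition rank_lift :: "nat set \<Rightarrow> (nat \<Rightarrow> 'a) \<Rightarrow> nat \<Rightarrow> 'a" where
  "rank_lift Z w k = w (card {z \<in> Z. z < k})"

lemma rank_lift_pick: "a < card Z \<Longrightarrow> rank_lift Z w (pick Z a) = w a"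
  by (simp add: rank_lift_def card_pick)

lemma rank_lift_of_pick: "k \<in> Z \<Longrightarrow> rank_lift Z (\<lambda>a. W (pick Z a)) k = W k"
  by (simp add: rank_lift_def pick_card_in_set)

lemma stack_index_less:
  fixes t d n N :: nat
  assumes "t < d" "n < N"
  shows "t * N + n < d * N"
proof -
  have "(t + 1) * N \<le> d * N" using assms by (intro mult_right_mono) auto
  then show ?thesis using assms by simp
qed

lemma inj_on_stack_index: "inj_on (\<lambda>(t, n). t * N + n) (T \<times> {..<N::nat})"
proof (rule inj_onI, clarsimp)
  fix t n t' n' :: nat
  assume "n < N" "n' < N" "t * N + n = t' * N + n'"
  moreover from this have "t = t'"
    by (metis add.commute div_mult_self1 div_less add_0_right less_nat_zero_code)
  ultimately show "t = t' \<and> n = n'" by simp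
qed

lemma comp_idx_eq_image:
  assumes "T \<subseteq> {..<d}"
  shows "comp_idx d N T = (\<lambda>(t, n). t * N + n) ` (T \<times> {..<N})"
proof (intro equalityI subsetI)
  fix k assume "k \<in> comp_idx d N T"
  then have k: "k < d * N" "k div N \<in> T" by (simp_all add: comp_idx_def)
  then have "0 < N" by (cases N) auto
  then have "k = (\<lambda>(t, n). t * N + n) (k div N, k mod N)" "(k div N, k mod N) \<in> T \<times> {..<N}"
    using k by simp_all
  then show "k \<in> (\<lambda>(t, n). t * N + n) ` (T \<times> {..<N})" by (rule rev_image_eqI[rotated])
next
  fix k assume "k \<in> (\<lambda>(t, n). t * N + n) ` (T \<times> {..<N})"
  then obtain t n where "k = t * N + n" "t \<in> T" "n < N" by auto
  moreover from this have "k < d * N" using assms stack_index_less by auto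
  ultimately show "k \<in> comp_idx d N T" by (simp add: comp_idx_def)
qed

lemma finite_comp_idx: "finite (comp_idx d N T)"
  unfolding comp_idx_def by simp

lemma comp_idx_restrict: "{k. k < d * N \<and> k \<in> comp_idx d N T} = comp_idx d N T"
  unfolding comp_idx_def by auto

lemma sum_comp_idx:
  assumes "T \<subseteq> {..<d}"
  shows "(\<Sum>k\<in>comp_idx d N T. f k) = (\<Sum>t\<in>T. \<Sum>n<N. f (t * N + n))"
  unfolding comp_idx_eq_image[OF assms] sum.reindex[OF inj_on_stack_index] sum.cartesian_product
  by (simp add: split_def)

lemma card_comp_idx: "T \<subseteq> {..<d} \<Longrightarrow> card (comp_idx d N T) = card T * N"
  by (simp add: comp_idx_eq_image card_image[OF inj_on_stack_index] card_cartesian_product)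

lemma pick_comp_idx_singleton:
  assumes "r < d" "i < N"
  shows "pick (comp_idx d N {r}) i = r * N + i"
proof -
  have Y: "comp_idx d N {r} = (\<lambda>n. r * N + n) ` {..<N}"
    using comp_idx_eq_image[of "{r}" d N] assms by auto
  have "{k \<in> comp_idx d N {r}. k < r * N + i} = (\<lambda>n. r * N + n) ` {..<i}"
    unfolding Y using assms by auto
  then have "card {k \<in> comp_idx d N {r}. k < r * N + i} = i"
    by (simp add: card_image)
  moreover have "r * N + i \<in> comp_idx d N {r}" unfolding Y using assms by simp
  ultimately show ?thesis using pick_card_in_set by metis
qed

lemma dim_stacked_cov [simp]:
  "dim_row (stacked_cov d N C) = d * N" "dim_col (stacked_cov d N C) = d * N"
  unfolding stacked_cov_def by simp_all

lemma stacked_cov_index: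
  assumes "t < d" "t' < d" "n < N" "n' < N"
  shows "stacked_cov d N C $$ (t * N + n, t' * N + n') = (if n = n' then C n $$ (t, t') else 0)"
  using assms stack_index_less[of t d n N] stack_index_less[of t' d n' N]
  by (simp add: stacked_cov_def)

lemma submatrix_stacked_cov:
  shows "submatrix (stacked_cov d N C) (comp_idx d N U) (comp_idx d N V)
           \<in> carrier_mat (card (comp_idx d N U)) (card (comp_idx d N V))"
    and "a < card (comp_idx d N U) \<Longrightarrow> b < card (comp_idx d N V) \<Longrightarrow>
         submatrix (stacked_cov d N C) (comp_idx d N U) (comp_idx d N V) $$ (a, b)
           = stacked_cov d N C $$ (pick (comp_idx d N U) a, pick (comp_idx d N V) b)"
proof -
  have dims: "card {k. k < dim_row (stacked_cov d N C) \<and> k \<in> comp_idx d N U} = card (comp_idx d N U)"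
    "card {k. k < dim_col (stacked_cov d N C) \<and> k \<in> comp_idx d N V} = card (comp_idx d N V)"
    by (simp_all only: dim_stacked_cov comp_idx_restrict)
  show "submatrix (stacked_cov d N C) (comp_idx d N U) (comp_idx d N V)
           \<in> carrier_mat (card (comp_idx d N U)) (card (comp_idx d N V))"
    by (simp only: carrier_mat_def mem_Collect_eq dim_submatrix dims simp_thms)
  show "submatrix (stacked_cov d N C) (comp_idx d N U) (comp_idx d N V) $$ (a, b)
           = stacked_cov d N C $$ (pick (comp_idx d N U) a, pick (comp_idx d N V) b)"
    if "a < card (comp_idx d N U)" "b < card (comp_idx d N V)"
    by (rule submatrix_index) (simp_all only: dims that)
qed

definition time_slice :: "nat set \<Rightarrow> nat \<Rightarrow> (nat \<Rightarrow> real) \<Rightarrow> nat \<Rightarrow> nat \<Rightarrow> real" where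
  "time_slice T N W n = (\<lambda>t. if t \<in> T then W (t * N + n) else 0)"

section \<open>Conditional variances\<close>

locale cov_sequence =
  fixes d N :: nat and C :: "nat \<Rightarrow> real mat" and \<alpha> :: "nat \<Rightarrow> real"
  assumes C_carrier: "n < N \<Longrightarrow> C n \<in> carrier_mat d d"
    and C_sym: "n < N \<Longrightarrow> transpose_mat (C n) = C n"
    and \<alpha>_pos: "n < N \<Longrightarrow> 0 < \<alpha> n"
    and \<alpha>_le_eigenvalue: "n < N \<Longrightarrow> eigenvalue (C n) lam \<Longrightarrow> \<alpha> n \<le> lam"
begin

lemma C_index_sym:
  assumes "n < N" "i < d" "j < d"
  shows "C n $$ (i, j) = C n $$ (j, i)"
proof -
  have "C n $$ (i, j) = transpose_mat (C n) $$ (j, i)"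
    using C_carrier[OF assms(1)] assms(2,3) by simp
  then show ?thesis using C_sym[OF assms(1)] by simp
qed

lemma qform_C_ge: "n < N \<Longrightarrow> \<alpha> n * sqnorm d x \<le> qform d (C n) x x"
  by (rule qform_ge_eigenvalue_bound[OF C_carrier]) (simp_all add: C_index_sym \<alpha>_le_eigenvalue)

lemma qform_C_nonneg:
  assumes "n < N"
  shows "0 \<le> qform d (C n) x x"
proof -
  have "0 \<le> \<alpha> n * sqnorm d x" using \<alpha>_pos[OF assms] sqnorm_nonneg by simp
  also have "\<dots> \<le> qform d (C n) x x" by (rule qform_C_ge[OF assms])
  finally show ?thesis .
qed

lemma qform_C_eq_0_imp:
  assumes "n < N" "qform d (C n) x x = 0"
  shows "\<forall>t<d. x t = 0"
proof -
  have "\<alpha> n * sqnorm d x \<le> 0" using qform_C_ge[OF assms(1), of x] assms(2) by simp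
  then have "sqnorm d x = 0"
    using \<alpha>_pos[OF assms(1)] sqnorm_nonneg[of d x] by (simp add: mult_le_0_iff)
  then show ?thesis using sqnorm_eq_0_imp by blast
qed

lemma Kmat_inverse:
  assumes "n < N"
  shows "Kmat C n * C n = 1\<^sub>m d" and "Kmat C n \<in> carrier_mat d d"
  using minv_if_qform_definite[OF C_carrier[OF assms] qform_C_eq_0_imp[OF assms]]
  unfolding Kmat_def by auto

lemma spd_inverse_C: "n < N \<Longrightarrow> spd_inverse (C n) (Kmat C n) d (\<alpha> n)"
  by unfold_locales (simp_all add: C_carrier Kmat_inverse C_index_sym qform_C_ge \<alpha>_pos)

lemma Kmat_diag_pos: "n < N \<Longrightarrow> r < d \<Longrightarrow> 0 < Kmat C n $$ (r, r)"
  by (rule spd_inverse.inverse_diag_pos[OF spd_inverse_C])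

lemma mtrace_minv_Ktilde:
  assumes "r < d"
  shows "mtrace (minv (Ktilde N C r)) = (\<Sum>n<N. 1 / Kmat C n $$ (r, r))"
proof -
  have "Ktilde N C r = mat_diag N (\<lambda>n. Kmat C n $$ (r, r))"
    unfolding Ktilde_def mat_diag_def by (intro eq_matI) auto
  moreover have "Kmat C n $$ (r, r) \<noteq> 0" if "n < N" for n
    using Kmat_diag_pos[OF that assms] by simp
  ultimately have "minv (Ktilde N C r) = mat_diag N (\<lambda>n. 1 / Kmat C n $$ (r, r))"
    by (simp add: minv_mat_diag)
  then show ?thesis by (simp add: mtrace_def mat_diag_def)
qed

lemma stacked_cov_sym:
  assumes "k < d * N" "l < d * N"
  shows "stacked_cov d N C $$ (k, l) = stacked_cov d N C $$ (l, k)"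
proof -
  have "0 < N" using assms by (cases N) auto
  then have "k div N < d" "l div N < d" "k mod N < N" "l mod N < N"
    using assms by (simp_all add: less_mult_imp_div_less)
  then show ?thesis using assms by (auto simp: stacked_cov_def C_index_sym)
qed

end

locale cond_setting = cov_sequence +
  fixes r :: nat and T :: "nat set"
  assumes r_less: "r < d" and T_sub: "T \<subseteq> {..<d}" and r_notin_T: "r \<notin> T"
begin

abbreviation "S \<equiv> stacked_cov d N C"
abbreviation "Y \<equiv> comp_idx d N {r}"
abbreviation "Z \<equiv> comp_idx d N T"
abbreviation "M \<equiv> submatrix S Z Z"
abbreviation "slice w \<equiv> time_slice T N (rank_lift Z w)"

definition cond_var :: "nat \<Rightarrow> real" where
  "cond_var i = cond_cov S Y Z $$ (i, i)"

lemma card_Y: "card Y = N"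
  using card_comp_idx[of "{r}" d N] r_less by simp

lemma M_carrier: "M \<in> carrier_mat (card Z) (card Z)"
  by (rule submatrix_stacked_cov(1))

lemma pick_Z_less: "a < card Z \<Longrightarrow> pick Z a < d * N"
  using pick_in_set[of a Z] by (simp add: comp_idx_def)

lemma M_sym: "a < card Z \<Longrightarrow> b < card Z \<Longrightarrow> M $$ (a, b) = M $$ (b, a)"
  by (simp add: submatrix_stacked_cov(2) stacked_cov_sym pick_Z_less)

lemma qform_stacked:
  "(\<Sum>k\<in>Z. \<Sum>l\<in>Z. W k * S $$ (k, l) * W l)
     = (\<Sum>n<N. qform d (C n) (time_slice T N W n) (time_slice T N W n))"
proof -
  have Td: "t \<in> T \<Longrightarrow> t < d" for t using T_sub by auto
  have "(\<Sum>k\<in>Z. \<Sum>l\<in>Z. W k * S $$ (k, l) * W l)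
      = (\<Sum>t\<in>T. \<Sum>n<N. \<Sum>t'\<in>T. \<Sum>n'<N. W (t * N + n) * S $$ (t * N + n, t' * N + n') * W (t' * N + n'))"
    by (simp add: sum_comp_idx[OF T_sub])
  also have "\<dots> = (\<Sum>t\<in>T. \<Sum>n<N. \<Sum>t'\<in>T. \<Sum>n'<N.
                    if n' = n then W (t * N + n) * C n $$ (t, t') * W (t' * N + n) else 0)"
    by (intro sum.cong refl) (auto simp: stacked_cov_index Td)
  also have "\<dots> = (\<Sum>n<N. \<Sum>t\<in>T. \<Sum>t'\<in>T. W (t * N + n) * C n $$ (t, t') * W (t' * N + n))"
    by (simp add: sum.swap[of _ T "{..<N}"])
  also have "\<dots> = (\<Sum>n<N. qform d (C n) (time_slice T N W n) (time_slice T N W n))"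
    unfolding time_slice_def qform_restrict[OF T_sub] ..
  finally show ?thesis .
qed

lemma qform_M: "qform (card Z) M w w = (\<Sum>n<N. qform d (C n) (slice w n) (slice w n))"
proof -
  let ?W = "rank_lift Z w"
  have "qform (card Z) M w w
      = (\<Sum>a<card Z. \<Sum>b<card Z. ?W (pick Z a) * S $$ (pick Z a, pick Z b) * ?W (pick Z b))"
    unfolding qform_def by (intro sum.cong refl) (simp add: submatrix_stacked_cov(2) rank_lift_pick)
  also have "\<dots> = (\<Sum>a<card Z. \<Sum>l\<in>Z. ?W (pick Z a) * S $$ (pick Z a, l) * ?W l)"
    by (intro sum.cong refl sum_pick[OF finite_comp_idx])
  also have "\<dots> = (\<Sum>k\<in>Z. \<Sum>l\<in>Z. ?W k * S $$ (k, l) * ?W l)"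
    by (rule sum_pick[OF finite_comp_idx])
  finally show ?thesis unfolding qform_stacked .
qed

lemma cross_term_slice:
  assumes i: "i < N"
  shows "(\<Sum>a<card Z. S $$ (r * N + i, pick Z a) * w a) = (\<Sum>t<d. C i $$ (r, t) * slice w i t)"
proof -
  let ?W = "rank_lift Z w"
  have Td: "t \<in> T \<Longrightarrow> t < d" for t using T_sub by auto
  have "(\<Sum>a<card Z. S $$ (r * N + i, pick Z a) * w a)
      = (\<Sum>a<card Z. S $$ (r * N + i, pick Z a) * ?W (pick Z a))"
    by (simp add: rank_lift_pick)
  also have "\<dots> = (\<Sum>k\<in>Z. S $$ (r * N + i, k) * ?W k)"
    by (rule sum_pick[OF finite_comp_idx])
  also have "\<dots> = (\<Sum>t\<in>T. \<Sum>n<N. S $$ (r * N + i, t * N + n) * ?W (t * N + n))"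
    by (rule sum_comp_idx[OF T_sub])
  also have "\<dots> = (\<Sum>t\<in>T. \<Sum>n<N. if n = i then C i $$ (r, t) * ?W (t * N + i) else 0)"
    using i r_less by (intro sum.cong refl) (auto simp: stacked_cov_index Td)
  also have "\<dots> = (\<Sum>t<d. if t \<in> T then C i $$ (r, t) * ?W (t * N + i) else 0)"
    using i by (simp add: sum_lessThan_restrict[OF T_sub])
  also have "\<dots> = (\<Sum>t<d. C i $$ (r, t) * slice w i t)"
    by (intro sum.cong) (auto simp: time_slice_def)
  finally show ?thesis .
qed

lemma qform_M_nonneg: "0 \<le> qform (card Z) M w w"
  unfolding qform_M by (intro sum_nonneg qform_C_nonneg) simp

lemma qform_M_eq_0_imp:
  assumes zero: "qform (card Z) M w w = 0"
  shows "\<forall>a<card Z. w a = 0"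
proof (intro allI impI)
  fix a assume a: "a < card Z"
  have slice_0: "slice w n t = 0" if "n < N" "t < d" for n t
  proof -
    have "qform d (C n) (slice w n) (slice w n) = 0"
      using zero qform_C_nonneg that(1) unfolding qform_M by (subst (asm) sum_nonneg_eq_0_iff) auto
    then show ?thesis using qform_C_eq_0_imp that by blast
  qed
  obtain t n where tn: "pick Z a = t * N + n" "t \<in> T" "n < N"
    using pick_in_set[of a Z] a comp_idx_eq_image[OF T_sub] by auto
  then have "slice w n t = w a" using a by (simp add: time_slice_def rank_lift_pick flip: tn(1))
  then show "w a = 0" using slice_0 tn T_sub by auto
qed

lemma M_inverse: "M * minv M = 1\<^sub>m (card Z)" "minv M \<in> carrier_mat (card Z) (card Z)"
  using minv_if_qform_definite[OF M_carrier qform_M_eq_0_imp] by auto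

lemma M_variational:
  shows "2 * (\<Sum>a<card Z. c a * w a) - qform (card Z) M w w \<le> qform (card Z) (minv M) c c"
    and "\<exists>w. 2 * (\<Sum>a<card Z. c a * w a) - qform (card Z) M w w = qform (card Z) (minv M) c c"
  by (rule qform_inverse_variational[OF M_carrier M_inverse(2) M_inverse(1) _ qform_M_nonneg];
      metis M_sym)+

lemma cond_var_eq_schur:
  assumes i: "i < N"
  shows "cond_var i = C i $$ (r, r)
           - qform (card Z) (minv M) (\<lambda>a. S $$ (r * N + i, pick Z a)) (\<lambda>a. S $$ (r * N + i, pick Z a))"
proof -
  let ?c = "\<lambda>a. S $$ (r * N + i, pick Z a)"
  let ?SYZ = "submatrix S Y Z" and ?SZY = "submatrix S Z Y" and ?P = "minv M"
  have YZ: "?SYZ \<in> carrier_mat N (card Z)" and ZY: "?SZY \<in> carrier_mat (card Z) N"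
    using submatrix_stacked_cov(1)[of d N C "{r}" T] submatrix_stacked_cov(1)[of d N C T "{r}"] card_Y
    by simp_all
  note P = M_inverse(2)
  have Y_i: "pick Y i = r * N + i" by (rule pick_comp_idx_singleton[OF r_less i])
  have rNi: "r * N + i < d * N" by (rule stack_index_less[OF r_less i])
  have "(?SYZ * ?P * ?SZY) $$ (i, i) = (\<Sum>a<card Z. (?SYZ * ?P) $$ (i, a) * ?SZY $$ (a, i))"
    by (rule index_mult_mat_sum[OF mult_carrier_mat[OF YZ P] ZY i i])
  also have "\<dots> = (\<Sum>a<card Z. (\<Sum>b<card Z. ?c b * ?P $$ (b, a)) * ?c a)"
    using i card_Y
    by (intro sum.cong refl)
      (simp add: index_mult_mat_sum[OF YZ P i] submatrix_stacked_cov(2) Y_i stacked_cov_sym pick_Z_less rNi)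
  also have "\<dots> = qform (card Z) ?P ?c ?c"
    unfolding qform_def sum_distrib_right by (subst sum.swap) (simp add: mult_ac)
  finally have "(?SYZ * ?P * ?SZY) $$ (i, i) = qform (card Z) ?P ?c ?c" .
  moreover have "submatrix S Y Y $$ (i, i) = C i $$ (r, r)"
    using i card_Y by (simp add: submatrix_stacked_cov(2) Y_i stacked_cov_index r_less)
  ultimately show ?thesis
    unfolding cond_var_def cond_cov_def using YZ P ZY i by simp
qed

lemma schur_objective_eq:
  assumes i: "i < N"
  shows "C i $$ (r, r) - 2 * (\<Sum>a<card Z. S $$ (r * N + i, pick Z a) * w a) + qform (card Z) M w w
       = qform d (C i) (\<lambda>t. (if t = r then 1 else 0) - slice w i t) (\<lambda>t. (if t = r then 1 else 0) - slice w i t)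
         + (\<Sum>n\<in>{..<N} - {i}. qform d (C n) (slice w n) (slice w n))"
proof -
  let ?e = "\<lambda>t. if t = r then 1 else 0 :: real"
  let ?u = "slice w i"
  have e_u: "qform d (C i) ?e ?u = (\<Sum>t<d. C i $$ (r, t) * ?u t)"
    by (rule qform_unit_left[OF r_less])
  have u_e: "qform d (C i) ?u ?e = (\<Sum>t<d. C i $$ (r, t) * ?u t)"
    using e_u qform_commute[OF C_index_sym[OF i]] by metis
  have e_e: "qform d (C i) ?e ?e = C i $$ (r, r)"
    using r_less by (simp add: qform_unit_left if_distrib cong: if_cong)
  have "qform d (C i) (\<lambda>t. ?e t - ?u t) (\<lambda>t. ?e t - ?u t)
      = qform d (C i) (\<lambda>t. ?e t + (-1) * ?u t) (\<lambda>t. ?e t + (-1) * ?u t)"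
    by simp
  also have "\<dots> = C i $$ (r, r) - 2 * (\<Sum>t<d. C i $$ (r, t) * ?u t) + qform d (C i) ?u ?u"
    unfolding qform_add_scaled e_u u_e e_e by simp
  finally have "qform d (C i) (\<lambda>t. ?e t - ?u t) (\<lambda>t. ?e t - ?u t)
      = C i $$ (r, r) - 2 * (\<Sum>t<d. C i $$ (r, t) * ?u t) + qform d (C i) ?u ?u" .
  moreover have "(\<Sum>n<N. qform d (C n) (slice w n) (slice w n))
      = qform d (C i) ?u ?u + (\<Sum>n\<in>{..<N} - {i}. qform d (C n) (slice w n) (slice w n))"
    using i by (subst sum.remove[of _ i]) auto
  ultimately show ?thesis unfolding qform_M cross_term_slice[OF i] by simp
qed

lemma cond_var_attained:
  assumes i: "i < N"
  obtains U where "U r = 1" and "\<And>t. t \<notin> T \<Longrightarrow> t \<noteq> r \<Longrightarrow> U t = 0"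
    and "qform d (C i) U U \<le> cond_var i"
proof -
  let ?c = "\<lambda>a. S $$ (r * N + i, pick Z a)"
  obtain w where w: "2 * (\<Sum>a<card Z. ?c a * w a) - qform (card Z) M w w = qform (card Z) (minv M) ?c ?c"
    using M_variational(2)[of ?c] by blast
  define U where "U = (\<lambda>t. (if t = r then 1 else 0) - slice w i t)"
  have "cond_var i = qform d (C i) U U + (\<Sum>n\<in>{..<N} - {i}. qform d (C n) (slice w n) (slice w n))"
    using schur_objective_eq[OF i, of w] cond_var_eq_schur[OF i] w unfolding U_def by simp
  moreover have "0 \<le> (\<Sum>n\<in>{..<N} - {i}. qform d (C n) (slice w n) (slice w n))"
    by (intro sum_nonneg qform_C_nonneg) auto
  ultimately have "qform d (C i) U U \<le> cond_var i" by simp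
  moreover have "U r = 1" using r_notin_T by (simp add: U_def time_slice_def)
  moreover have "U t = 0" if "t \<notin> T" "t \<noteq> r" for t
    using that by (simp add: U_def time_slice_def)
  ultimately show ?thesis by (intro that)
qed

lemma cond_var_le:
  assumes i: "i < N" and U_r: "U r = 1" and U_0: "\<And>t. t < d \<Longrightarrow> t \<notin> T \<Longrightarrow> t \<noteq> r \<Longrightarrow> U t = 0"
  shows "cond_var i \<le> qform d (C i) U U"
proof -
  let ?c = "\<lambda>a. S $$ (r * N + i, pick Z a)"
  define W where "W k = (if k mod N = i then - U (k div N) else 0)" for k
  define w where "w = (\<lambda>a. W (pick Z a))"
  have slice_w: "slice w n t = (if t \<in> T \<and> n = i then - U t else 0)" if "n < N" for n t
  proof (cases "t \<in> T")
    case True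
    then have "t * N + n \<in> Z" using comp_idx_eq_image[OF T_sub] that by auto
    then show ?thesis using True that
      by (simp add: time_slice_def w_def rank_lift_of_pick) (simp add: W_def)
  qed (simp add: time_slice_def)
  have "cond_var i \<le> C i $$ (r, r) - 2 * (\<Sum>a<card Z. ?c a * w a) + qform (card Z) M w w"
    using M_variational(1)[of ?c w] cond_var_eq_schur[OF i] by simp
  also have "\<dots> = qform d (C i) (\<lambda>t. (if t = r then 1 else 0) - slice w i t) (\<lambda>t. (if t = r then 1 else 0) - slice w i t)"
    unfolding schur_objective_eq[OF i] using slice_w by (simp add: qform_def)
  also have "\<dots> = qform d (C i) U U"
    using U_r U_0 r_notin_T by (intro qform_cong) (auto simp: slice_w[OF i])
  finally show ?thesis .
qed

lemma cond_var_ge_inverse_diag: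
  assumes i: "i < N"
  shows "1 / Kmat C i $$ (r, r) \<le> cond_var i"
proof -
  interpret spd_inverse "C i" "Kmat C i" d "\<alpha> i" by (rule spd_inverse_C[OF i])
  obtain U where "U r = 1" and "qform d (C i) U U \<le> cond_var i"
    using cond_var_attained[OF i] by blast
  moreover have "0 \<le> \<alpha> i * sqnorm d (\<lambda>t. U t - scaled_row (Kmat C i) r t)"
    using a_pos sqnorm_nonneg by simp
  ultimately show ?thesis using qform_ge_scaled_row[OF r_less, of U] by linarith
qed

lemma cond_var_ge_partial_corr:
  assumes i: "i < N" and b: "b < d" "b \<notin> T" "b \<noteq> r"
  shows "1 / Kmat C i $$ (r, r) + \<alpha> i * (Kmat C i $$ (r, b) / Kmat C i $$ (r, r))\<^sup>2 \<le> cond_var i"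
proof -
  interpret spd_inverse "C i" "Kmat C i" d "\<alpha> i" by (rule spd_inverse_C[OF i])
  let ?g = "scaled_row (Kmat C i) r"
  obtain U where U: "U r = 1" "\<And>t. t \<notin> T \<Longrightarrow> t \<noteq> r \<Longrightarrow> U t = 0"
    and le: "qform d (C i) U U \<le> cond_var i"
    using cond_var_attained[OF i] by blast
  have "(Kmat C i $$ (r, b) / Kmat C i $$ (r, r))\<^sup>2 = (U b - ?g b)\<^sup>2"
    using U b by (simp add: scaled_row_def)
  also have "\<dots> \<le> sqnorm d (\<lambda>t. U t - ?g t)" by (rule sq_le_sqnorm[OF b(1)])
  finally have "\<alpha> i * (Kmat C i $$ (r, b) / Kmat C i $$ (r, r))\<^sup>2 \<le> \<alpha> i * sqnorm d (\<lambda>t. U t - ?g t)"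
    using a_pos by (simp add: mult_left_mono)
  then show ?thesis using qform_ge_scaled_row[OF r_less, of U] U(1) le by linarith
qed

lemma cond_var_eq_inverse_diag:
  assumes i: "i < N" and row: "\<And>t. t < d \<Longrightarrow> t \<notin> T \<Longrightarrow> t \<noteq> r \<Longrightarrow> Kmat C i $$ (r, t) = 0"
  shows "cond_var i = 1 / Kmat C i $$ (r, r)"
proof (rule antisym)
  interpret spd_inverse "C i" "Kmat C i" d "\<alpha> i" by (rule spd_inverse_C[OF i])
  show "cond_var i \<le> 1 / Kmat C i $$ (r, r)"
    using cond_var_le[OF i, of "scaled_row (Kmat C i) r", OF scaled_row_self[OF r_less]] row
      qform_scaled_row[OF r_less]
    by (simp add: scaled_row_def)
  show "1 / Kmat C i $$ (r, r) \<le> cond_var i" by (rule cond_var_ge_inverse_diag[OF i])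
qed

lemma CV_eq_sum_cond_var: "CV d N C r T = (\<Sum>i<N. cond_var i) / real N"
proof -
  have "submatrix S Y Z \<in> carrier_mat N (card Z)"
    using submatrix_stacked_cov(1)[of d N C "{r}" T] card_Y by simp
  then have "dim_row (cond_cov S Y Z) = N" by (simp add: cond_cov_def)
  then show ?thesis by (simp add: CV_def mtrace_def cond_var_def)
qed

end

theorem theorem1:
  fixes d N s :: nat and C :: "nat \<Rightarrow> real mat" and \<alpha> \<beta> :: "nat \<Rightarrow> real"
    and \<rho>min :: real and r :: nat and T :: "nat set"
  assumes "d \<ge> 1" and "N \<ge> 1" and "s \<ge> 1"
    and C_carrier: "\<And>n. n < N \<Longrightarrow> C n \<in> carrier_mat d d"
    and C_sym: "\<And>n. n < N \<Longrightarrow> transpose_mat (C n) = C n"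
    and \<alpha>_pos: "\<And>n. n < N \<Longrightarrow> 0 < \<alpha> n"
    and \<alpha>\<beta>: "\<And>n. n < N \<Longrightarrow> \<alpha> n \<le> \<beta> n"
    and eig: "\<And>n lam. n < N \<Longrightarrow> eigenvalue (C n) lam \<Longrightarrow> \<alpha> n \<le> lam \<and> lam \<le> \<beta> n"
    and deg: "\<And>r'. r' < d \<Longrightarrow> card (nbhd d N C r') \<le> s"
    and \<rho>min_pos: "\<rho>min > 0"
    and \<rho>min: "\<And>a b. cig_edge d N C a b \<Longrightarrow> part_corr N C \<alpha> a b \<ge> \<rho>min"
    and r: "r < d"
    and T: "T \<subseteq> {0..<d} - {r}" and card_T: "card T \<le> s"
  shows "(nbhd d N C r - T \<noteq> {} \<longrightarrow>
            CV d N C r T \<ge> \<rho>min + mtrace (minv (Ktilde N C r)) / real N)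
       \<and> (nbhd d N C r \<subseteq> T \<longrightarrow>
            CV d N C r T = mtrace (minv (Ktilde N C r)) / real N)"
proof -
  interpret cond_setting d N C \<alpha> r T
    using C_carrier C_sym \<alpha>_pos eig r T by unfold_locales auto
  show ?thesis
  proof (intro conjI impI)
    assume "nbhd d N C r - T \<noteq> {}"
    then obtain b where edge: "cig_edge d N C r b" and b: "b \<notin> T" "b < d" "b \<noteq> r"
      unfolding nbhd_def cig_edge_def by auto
    have "(\<Sum>i<N. 1 / Kmat C i $$ (r, r) + \<alpha> i * (Kmat C i $$ (r, b) / Kmat C i $$ (r, r))\<^sup>2)
        \<le> (\<Sum>i<N. cond_var i)"
      using b by (intro sum_mono cond_var_ge_partial_corr) auto
    then have "(\<Sum>i<N. 1 / Kmat C i $$ (r, r) + \<alpha> i * (Kmat C i $$ (r, b) / Kmat C i $$ (r, r))\<^sup>2) / real N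
        \<le> CV d N C r T"
      unfolding CV_eq_sum_cond_var by (rule divide_right_mono) simp
    moreover have "(\<Sum>i<N. 1 / Kmat C i $$ (r, r) + \<alpha> i * (Kmat C i $$ (r, b) / Kmat C i $$ (r, r))\<^sup>2) / real N
        = mtrace (minv (Ktilde N C r)) / real N + part_corr N C \<alpha> r b"
      unfolding mtrace_minv_Ktilde[OF r] part_corr_def sum.distrib by (simp add: add_divide_distrib)
    ultimately show "CV d N C r T \<ge> \<rho>min + mtrace (minv (Ktilde N C r)) / real N"
      using \<rho>min[OF edge] by linarith
  next
    assume "nbhd d N C r \<subseteq> T"
    then have "Kmat C i $$ (r, t) = 0" if "i < N" "t < d" "t \<notin> T" "t \<noteq> r" for i t
      using that r unfolding nbhd_def cig_edge_def by auto
    then show "CV d N C r T = mtrace (minv (Ktilde N C r)) / real N"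
      by (simp add: CV_eq_sum_cond_var mtrace_minv_Ktilde[OF r] cond_var_eq_inverse_diag)
  qed
qed

end
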